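(* Let $m\ge2$, $r\ge1$, $k\ge1$, and let $\Phi:\Sigma_m^r\to\mathbb{R}$ be a function which depends only on the first $k$ coordinates of each of its $r$ variables. Let $\alpha\in\mathbb{R}$ be such that $\mathcal{M}_\Phi(\alpha)=\{\mu\in\mathcal{M}_{\rm inv}:\int_{\Sigma_m^r}\Phi\,d\mu^{\otimes r}=\alpha\}\neq\emptyset$. Then the supremum $\sup_{\mu\in\mathcal{M}_\Phi(\alpha)}h_\mu$ (which equals $h_{\rm top}(E_\Phi(\alpha))$) is attained by a $(k-1)$-Markov measure.
   Context: $\Sigma_m=\{0,\dots,m-1\}^{\mathbb{N}}$, points written $x=(x_1,x_2,\dots)$, with the left shift $\sigma$. $\mathcal{M}_{\rm inv}$ is the set of $\sigma$-invariant Borel probability measures on $\Sigma_m$, $h_\mu$ the measure-theoretic entropy, $\mu^{\otimes r}$ the $r$-fold product measure. $E_\Phi(\alpha)=\{x\in\Sigma_m:\lim_{n\to\infty}n^{-r}\sum_{1\le i_1,\dots,i_r\le n}\Phi(\sigma^{i_1}x,\dots,\sigma^{i_r}x)=\alpha\}$ and $h_{\rm top}$ is Bowen's topological entropy of a set. A $(k-1)$-Markov measure is a $\sigma$-invariant measure $\nu$ under which, for every $n>k-1$, the conditional law of $x_n$ given $x_1,\dots,x_{n-1}$ depends only on $x_{n-k+1},\dots,x_{n-1}$ (for $k=1$: a Bernoulli measure; for $k=2$: a stationary Markov measure). *)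

theory Defs
  imports "HOL-Probability.Probability"
begin

text \<open>A point x = (x_1, x_2, ...) is represented
  by a function x :: nat => nat with x_{j+1} = x j (0-based storage), and values < m.
  The sigma-algebra is the product sigma-algebra of discrete ones (= Borel sets of
  the product topology).\<close>
definition shift_space :: "nat \<Rightarrow> (nat \<Rightarrow> nat) measure" where
  "shift_space m = PiM UNIV (\<lambda>_. count_space {..<m})"

definition shift :: "(nat \<Rightarrow> nat) \<Rightarrow> (nat \<Rightarrow> nat)" where
  "shift x = (\<lambda>n. x (Suc n))"

definition inv_measures :: "nat \<Rightarrow> (nat \<Rightarrow> nat) measure set" where
  "inv_measures m = {\<mu>. sets \<mu> = sets (shift_space m) \<and> prob_space \<mu> \<and>
                        distr \<mu> (shift_space m) shift = \<mu>}"

definition cyl :: "nat \<Rightarrow> nat list \<Rightarrow> (nat \<Rightarrow> nat) set" where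
  "cyl m w = {x \<in> space (shift_space m). \<forall>i<length w. x i = w ! i}"

definition words :: "nat \<Rightarrow> nat \<Rightarrow> nat list set" where
  "words m n = {w. length w = n \<and> set w \<subseteq> {..<m}}"

text \<open>Measure-theoretic (Kolmogorov--Sinai) entropy of an invariant measure on the
  full shift, computed with the generating partition into 1-cylinders:
  h_mu = lim (1/n) * sum over words w of length n of - mu[w] log mu[w].\<close>
definition ms_entropy :: "nat \<Rightarrow> (nat \<Rightarrow> nat) measure \<Rightarrow> real" where
  "ms_entropy m \<mu> = lim (\<lambda>n. (1 / real n) *
      (\<Sum>w\<in>words m n. - measure \<mu> (cyl m w) * ln (measure \<mu> (cyl m w))))"

text \<open>Phi : Sigma_m^r -> R depends only on the first k coordinates of each variable.
  Elements of Sigma_m^r are families xs indexed by i < r (xs i is the i-th point).\<close>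
definition depends_on_first :: "nat \<Rightarrow> nat \<Rightarrow> nat \<Rightarrow> ((nat \<Rightarrow> nat \<Rightarrow> nat) \<Rightarrow> real) \<Rightarrow> bool" where
  "depends_on_first m r k \<Phi> \<longleftrightarrow>
     (\<forall>xs \<in> space (PiM {..<r} (\<lambda>_. shift_space m)).
      \<forall>ys \<in> space (PiM {..<r} (\<lambda>_. shift_space m)).
        (\<forall>i<r. \<forall>j<k. xs i j = ys i j) \<longrightarrow> \<Phi> xs = \<Phi> ys)"

definition level_measures ::
  "nat \<Rightarrow> nat \<Rightarrow> ((nat \<Rightarrow> nat \<Rightarrow> nat) \<Rightarrow> real) \<Rightarrow> real \<Rightarrow> (nat \<Rightarrow> nat) measure set" where
  "level_measures m r \<Phi> \<alpha> =
     {\<mu> \<in> inv_measures m. integral\<^sup>L (PiM {..<r} (\<lambda>_. \<mu>)) \<Phi> = \<alpha>}"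

text \<open>(k-1)-Markov measure: invariant, and for every n > k-1 the conditional law of x_n
  given x_1..x_{n-1} depends only on x_{n-k+1}..x_{n-1}; stated with cylinders:
  nu[w a] = nu[w] * q_n(last k-1 symbols of w, a) for all words w of length n-1.\<close>
definition markov_measure :: "nat \<Rightarrow> nat \<Rightarrow> (nat \<Rightarrow> nat) measure \<Rightarrow> bool" where
  "markov_measure m l \<nu> \<longleftrightarrow> \<nu> \<in> inv_measures m \<and>
     (\<exists>q :: nat \<Rightarrow> nat list \<Rightarrow> nat \<Rightarrow> real. \<forall>n. n > l \<longrightarrow>
        (\<forall>w\<in>words m (n - 1). \<forall>a<m.
           measure \<nu> (cyl m (w @ [a])) =
             measure \<nu> (cyl m w) * q n (drop (length w - l) w) a))"

end

theory Submission
  imports Defs "HOL-Real_Asymp.Real_Asymp"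
begin

text \<open>The entropy of an
  invariant \<open>\<mu>\<close> is the Cesaro limit of the conditional entropies
  \<open>c\<^sub>n = H(x\<^sub>n\<^sub>+\<^sub>1 | x\<^sub>1 \<dots> x\<^sub>n)\<close>, which decrease by the log-sum inequality; hence
  \<open>h\<^sub>\<mu> \<le> c\<^sub>k\<^sub>-\<^sub>1\<close>, a continuous function of the \<open>k\<close>-block distribution of \<open>\<mu>\<close>.
  Since \<open>\<Phi>\<close> depends on \<open>k\<close> coordinates only, \<open>\<integral>\<Phi> d\<mu>\<^sup>\<otimes>\<^sup>r\<close> is a polynomial in the
  \<open>k\<close>-block probabilities, so membership in \<open>\<M>\<^sub>\<Phi>(\<alpha>)\<close> is a closed condition on the
  \<open>k\<close>-block distribution. On the compact, non-empty set of stationary \<open>k\<close>-block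
  distributions satisfying it, \<open>c\<^sub>k\<^sub>-\<^sub>1\<close> attains its maximum at some \<open>\<pi>\<close>. The
  \<open>(k-1)\<close>-Markov measure extending \<open>\<pi>\<close> (built with the Ionescu-Tulcea theorem) has
  \<open>k\<close>-block distribution \<open>\<pi>\<close>, so it lies in \<open>\<M>\<^sub>\<Phi>(\<alpha>)\<close>, and its conditional entropies are
  constant from \<open>k - 1\<close> on, so its entropy is \<open>c\<^sub>k\<^sub>-\<^sub>1(\<pi>) \<ge> h\<^sub>\<mu>\<close>.\<close>

section \<open>The log-sum inequality\<close>

text \<open>Note \<open>kl_term 0 x = 0\<close> for every \<open>x\<close>, matching the convention \<open>0 ln 0 = 0\<close>.\<close>
definition kl_term :: "real \<Rightarrow> real \<Rightarrow> real" where
  "kl_term y x = y * ln (y / x)"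

lemma kl_term_sum_le_pos:
  fixes x y :: "'b \<Rightarrow> real"
  assumes fin: "finite B" and ne: "B \<noteq> {}"
    and pos: "\<And>b. b \<in> B \<Longrightarrow> 0 < y b" and yx: "\<And>b. b \<in> B \<Longrightarrow> y b \<le> x b"
    and X: "(\<Sum>b\<in>B. x b) \<le> X"
  shows "kl_term (\<Sum>b\<in>B. y b) X \<le> (\<Sum>b\<in>B. kl_term (y b) (x b))"
proof -
  define Y where "Y = (\<Sum>b\<in>B. y b)"
  have "Y > 0" unfolding Y_def using fin ne pos by (simp add: sum_pos)
  moreover have "Y \<le> (\<Sum>b\<in>B. x b)" unfolding Y_def by (rule sum_mono) (rule yx)
  ultimately have "Y > 0" "Y \<le> X" using X by linarith+
  then have "X > 0" by linarith
  have xpos: "x b > 0" if "b \<in> B" for b using pos[OF that] yx[OF that] by linarith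
  have split: "y b * ln (Y / X) - kl_term (y b) (x b) = y b * ln ((Y * x b) / (X * y b))"
    if b: "b \<in> B" for b
    using \<open>Y > 0\<close> \<open>X > 0\<close> pos[OF b] xpos[OF b]
    by (simp add: kl_term_def ln_div ln_mult algebra_simps)
  have "kl_term Y X = (\<Sum>b\<in>B. y b * ln (Y / X))"
    by (simp add: kl_term_def Y_def sum_distrib_right)
  then have "kl_term Y X - (\<Sum>b\<in>B. kl_term (y b) (x b))
      = (\<Sum>b\<in>B. y b * ln (Y / X) - kl_term (y b) (x b))"
    by (simp add: sum_subtractf)
  also have "\<dots> = (\<Sum>b\<in>B. y b * ln ((Y * x b) / (X * y b)))"
    by (rule sum.cong) (simp_all add: split)
  also have "\<dots> \<le> (\<Sum>b\<in>B. y b * ((Y * x b) / (X * y b) - 1))"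
    using \<open>Y > 0\<close> \<open>X > 0\<close> pos xpos
    by (intro sum_mono mult_left_mono ln_le_minus_one divide_pos_pos mult_pos_pos) (auto simp: less_imp_le)
  also have "\<dots> = (\<Sum>b\<in>B. (Y / X) * x b - y b)"
  proof (rule sum.cong[OF refl])
    fix b assume "b \<in> B"
    then have "y b \<noteq> 0" using pos by force
    then show "y b * ((Y * x b) / (X * y b) - 1) = (Y / X) * x b - y b"
      using \<open>X > 0\<close> by (simp add: field_simps)
  qed
  also have "\<dots> = (Y / X) * (\<Sum>b\<in>B. x b) - Y"
    by (simp add: Y_def sum_subtractf sum_distrib_left)
  also have "\<dots> \<le> (Y / X) * X - Y"
    using X \<open>Y > 0\<close> \<open>X > 0\<close> by (intro diff_right_mono mult_left_mono) auto
  also have "\<dots> = 0" using \<open>X > 0\<close> by simp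
  finally show ?thesis unfolding Y_def by simp
qed

text \<open>On the support of \<open>y\<close> this is the previous lemma with \<open>X = \<Sigma>\<^sub>B x\<close>.\<close>
lemma kl_term_sum_le:
  fixes x y :: "'b \<Rightarrow> real"
  assumes fin: "finite B" and y0: "\<And>b. b \<in> B \<Longrightarrow> 0 \<le> y b"
    and yx: "\<And>b. b \<in> B \<Longrightarrow> y b \<le> x b"
  shows "kl_term (\<Sum>b\<in>B. y b) (\<Sum>b\<in>B. x b) \<le> (\<Sum>b\<in>B. kl_term (y b) (x b))"
proof -
  define B' where "B' = {b\<in>B. y b > 0}"
  have sub: "B' \<subseteq> B" and fin': "finite B'" using fin by (auto simp: B'_def)
  have zero: "y b = 0" if "b \<in> B - B'" for b using that y0 by (force simp: B'_def)
  have Y: "(\<Sum>b\<in>B. y b) = (\<Sum>b\<in>B'. y b)"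
    by (rule sum.mono_neutral_right[OF fin sub]) (use zero in auto)
  have R: "(\<Sum>b\<in>B. kl_term (y b) (x b)) = (\<Sum>b\<in>B'. kl_term (y b) (x b))"
    by (rule sum.mono_neutral_right[OF fin sub]) (use zero in \<open>auto simp: kl_term_def\<close>)
  show ?thesis
  proof (cases "B' = {}")
    case True
    then show ?thesis using Y R by (simp add: kl_term_def)
  next
    case False
    have X: "(\<Sum>b\<in>B'. x b) \<le> (\<Sum>b\<in>B. x b)"
      by (rule sum_mono2[OF fin sub]) (use y0 yx in force)
    show ?thesis unfolding Y R
      by (rule kl_term_sum_le_pos[OF fin' False _ _ X]) (auto simp: B'_def yx)
  qed
qed

lemma kl_term_nonpos:
  assumes "0 \<le> y" "y \<le> x"
  shows "kl_term y x \<le> 0"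
  using assms by (cases "y = 0") (auto simp: kl_term_def mult_nonneg_nonpos)

lemma kl_term_scale: "0 \<le> x \<Longrightarrow> kl_term (x * t) x = x * kl_term t 1"
  by (cases "x = 0") (auto simp: kl_term_def)

lemma sum_kl_term_total:
  fixes y :: "'b \<Rightarrow> real"
  assumes fin: "finite A" and y: "\<And>a. a \<in> A \<Longrightarrow> 0 \<le> y a"
  shows "(\<Sum>a\<in>A. - kl_term (y a) (\<Sum>b\<in>A. y b))
           = (\<Sum>b\<in>A. y b) * ln (\<Sum>b\<in>A. y b) - (\<Sum>a\<in>A. y a * ln (y a))"
proof -
  define X where "X = (\<Sum>b\<in>A. y b)"
  have "X \<ge> 0" unfolding X_def using y by (simp add: sum_nonneg)
  have summand: "- kl_term (y a) X = y a * ln X - y a * ln (y a)" if a: "a \<in> A" for a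
  proof (cases "y a = 0")
    case False
    then have "y a > 0" "X > 0"
      using y[OF a] member_le_sum[OF a, of y] y fin by (auto simp: X_def)
    then show ?thesis by (simp add: kl_term_def ln_div algebra_simps)
  qed (simp add: kl_term_def)
  have "(\<Sum>a\<in>A. - kl_term (y a) X) = (\<Sum>a\<in>A. y a * ln X - y a * ln (y a))"
    by (rule sum.cong) (simp_all add: summand)
  also have "\<dots> = X * ln X - (\<Sum>a\<in>A. y a * ln (y a))"
    by (simp add: sum_subtractf sum_distrib_right X_def)
  finally show ?thesis unfolding X_def .
qed

section \<open>Cylinders and words\<close>

lemma space_shift_space: "space (shift_space m) = {x. \<forall>i. x i < m}"
  unfolding shift_space_def by (auto simp: space_PiM PiE_def Pi_def extensional_def)

lemma sets_cyl [measurable]: "cyl m w \<in> sets (shift_space m)"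
proof -
  have "cyl m w = space (shift_space m) \<inter> (\<Inter>i<length w. {x \<in> space (shift_space m). x i = w ! i})"
    unfolding cyl_def by auto
  also have "\<dots> \<in> sets (shift_space m)"
    unfolding shift_space_def by measurable
  finally show ?thesis .
qed

lemma shift_measurable [measurable]: "shift \<in> measurable (shift_space m) (shift_space m)"
  unfolding shift_space_def
  by (rule measurable_PiM_single') (auto simp: shift_def space_PiM PiE_def extensional_def)

lemma cyl_Nil: "cyl m [] = space (shift_space m)"
  unfolding cyl_def by auto

lemma cyl_eq_UN_snoc: "cyl m w = (\<Union>a<m. cyl m (w @ [a]))"
  unfolding cyl_def by (auto simp: space_shift_space nth_append less_Suc_eq)

lemma cyl_nth: "x \<in> cyl m w \<Longrightarrow> i < length w \<Longrightarrow> x i = w ! i"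
  unfolding cyl_def by auto

lemma disjoint_family_cyl_snoc: "disjoint_family_on (\<lambda>a. cyl m (w @ [a])) A"
proof -
  have "x (length w) = a" if "x \<in> cyl m (w @ [a])" for x a
    using cyl_nth[OF that, of "length w"] by simp
  then show ?thesis unfolding disjoint_family_on_def by blast
qed

lemma disjoint_family_cyl_Cons: "disjoint_family_on (\<lambda>a. cyl m (a # w)) A"
proof -
  have "x 0 = a" if "x \<in> cyl m (a # w)" for x a
    using cyl_nth[OF that, of 0] by simp
  then show ?thesis unfolding disjoint_family_on_def by blast
qed

lemma shift_vimage_cyl: "shift -` cyl m w \<inter> space (shift_space m) = (\<Union>a<m. cyl m (a # w))"
  unfolding cyl_def shift_def by (auto simp: space_shift_space nth_Cons' less_Suc_eq_0_disj)

lemma cyl_append_subset: "cyl m (w @ v) \<subseteq> cyl m w"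
  unfolding cyl_def by (auto simp: nth_append)

lemma length_words: "w \<in> words m n \<Longrightarrow> length w = n"
  unfolding words_def by auto

lemma finite_words: "finite (words m n)"
  using finite_lists_length_eq[of "{..<m}" n] unfolding words_def by (simp add: conj_commute)

lemma words_0: "words m 0 = {[]}"
  unfolding words_def by auto

lemma words_appendI: "v \<in> words m i \<Longrightarrow> u \<in> words m j \<Longrightarrow> v @ u \<in> words m (i + j)"
  unfolding words_def by auto

lemma words_snocI: "w \<in> words m n \<Longrightarrow> a < m \<Longrightarrow> w @ [a] \<in> words m (Suc n)"
  unfolding words_def by auto

lemma words_ConsI: "w \<in> words m n \<Longrightarrow> a < m \<Longrightarrow> a # w \<in> words m (Suc n)"
  unfolding words_def by auto

lemma drop_in_words: "v \<in> words m j \<Longrightarrow> drop (length v - l) v \<in> words m (min j l)"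
  unfolding words_def by (auto dest: in_set_dropD)

lemma words_add: "words m (i + j) = (\<lambda>(v, u). v @ u) ` (words m i \<times> words m j)"
proof safe
  fix w assume "w \<in> words m (i + j)"
  then show "w \<in> (\<lambda>(v, u). v @ u) ` (words m i \<times> words m j)"
    unfolding words_def
    by (auto intro!: image_eqI[of _ _ "(take i w, drop i w)"] dest: in_set_takeD in_set_dropD)
qed (auto simp: words_def)

lemma sum_words_add:
  "(\<Sum>w\<in>words m (i + j). f w) = (\<Sum>v\<in>words m i. \<Sum>u\<in>words m j. f (v @ u))"
proof -
  have inj: "inj_on (\<lambda>(v, u). v @ u) (words m i \<times> words m j)"
    unfolding inj_on_def words_def by auto
  show ?thesis
    unfolding words_add sum.reindex[OF inj] sum.cartesian_product by (simp add: split_def comp_def)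
qed

lemma words_1: "words m (Suc 0) = (\<lambda>a. [a]) ` {..<m}"
  unfolding words_def by (auto simp: length_Suc_conv)

lemma sum_words_snoc:
  "(\<Sum>w\<in>words m (Suc n). f w) = (\<Sum>v\<in>words m n. \<Sum>a<m. f (v @ [a]))"
  using sum_words_add[where i=n and j=1 and f=f] by (simp add: words_1 sum.reindex inj_on_def)

lemma sum_words_Cons:
  "(\<Sum>w\<in>words m (Suc n). f w) = (\<Sum>a<m. \<Sum>v\<in>words m n. f (a # v))"
  using sum_words_add[where i=1 and j=n and f=f] by (simp add: words_1 sum.reindex inj_on_def)

lemma cyl_disjoint:
  assumes "v \<in> words m n" "w \<in> words m n" "v \<noteq> w"
  shows "cyl m v \<inter> cyl m w = {}"
proof -
  obtain i where "i < n" "v ! i \<noteq> w ! i"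
    using assms nth_equalityI[of v w] by (auto simp: length_words)
  then show ?thesis using assms cyl_nth[of _ m v i] cyl_nth[of _ m w i] by (auto simp: length_words)
qed

lemma prod_emb_eq_UN_cyl:
  assumes J: "J \<subseteq> {..<N}" and A: "\<And>j. j \<in> J \<Longrightarrow> A j \<subseteq> {..<m}"
  shows "prod_emb UNIV (\<lambda>_. count_space {..<m}) J (PiE J A) =
    (\<Union>w\<in>{w \<in> words m N. \<forall>j\<in>J. w ! j \<in> A j}. cyl m w)"
proof safe
  fix x assume "x \<in> prod_emb UNIV (\<lambda>_. count_space {..<m}) J (PiE J A)"
  then have xs: "\<forall>i. x i < m" and xa: "\<forall>j\<in>J. x j \<in> A j"
    by (auto simp: prod_emb_iff PiE_iff)
  then have "map x [0..<N] \<in> {w \<in> words m N. \<forall>j\<in>J. w ! j \<in> A j}"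
    using J unfolding words_def by auto
  moreover have "x \<in> cyl m (map x [0..<N])"
    unfolding cyl_def using xs by (auto simp: space_shift_space)
  ultimately show "x \<in> (\<Union>w\<in>{w \<in> words m N. \<forall>j\<in>J. w ! j \<in> A j}. cyl m w)" by blast
next
  fix x w assume w: "w \<in> words m N" "\<forall>j\<in>J. w ! j \<in> A j" and x: "x \<in> cyl m w"
  then have "\<forall>j\<in>J. x j = w ! j" using J unfolding cyl_def words_def by auto
  with x w(2) show "x \<in> prod_emb UNIV (\<lambda>_. count_space {..<m}) J (PiE J A)"
    unfolding cyl_def by (auto simp: prod_emb_iff PiE_iff space_shift_space)
qed

text \<open>Finite-dimensional rectangles are finite disjoint unions of cylinders.\<close>
lemma measure_eqI_cyl:
  fixes \<mu>1 \<mu>2 :: "(nat \<Rightarrow> nat) measure"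
  assumes s1: "sets \<mu>1 = sets (shift_space m)" and s2: "sets \<mu>2 = sets (shift_space m)"
    and f1: "finite_measure \<mu>1" and f2: "finite_measure \<mu>2"
    and eq: "\<And>n w. w \<in> words m n \<Longrightarrow> measure \<mu>1 (cyl m w) = measure \<mu>2 (cyl m w)"
  shows "\<mu>1 = \<mu>2"
proof (rule measure_eqI_PiM_infinite)
  show "sets \<mu>1 = sets (PiM UNIV (\<lambda>_. count_space {..<m}))"
       "sets \<mu>2 = sets (PiM UNIV (\<lambda>_. count_space {..<m}))"
    using s1 s2 unfolding shift_space_def .
  show "finite_measure \<mu>1" by fact
  fix A J assume J: "finite (J :: nat set)"
    and A: "\<And>i. i \<in> J \<Longrightarrow> A i \<in> sets (count_space {..<m})"
  obtain N where N: "J \<subseteq> {..<N}" using J finite_nat_bounded by blast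
  let ?G = "{w \<in> words m N. \<forall>j\<in>J. w ! j \<in> A j}"
  have union: "emeasure \<mu> (\<Union>w\<in>?G. cyl m w) = ennreal (\<Sum>w\<in>?G. measure \<mu> (cyl m w))"
    if "sets \<mu> = sets (shift_space m)" "finite_measure \<mu>" for \<mu> :: "(nat \<Rightarrow> nat) measure"
  proof -
    interpret finite_measure \<mu> by fact
    have "disjoint_family_on (cyl m) ?G"
      unfolding disjoint_family_on_def using cyl_disjoint by blast
    then show ?thesis using that finite_words[of m N]
      by (subst emeasure_eq_measure, subst finite_measure_finite_Union) auto
  qed
  have "(\<Sum>w\<in>?G. measure \<mu>1 (cyl m w)) = (\<Sum>w\<in>?G. measure \<mu>2 (cyl m w))"
    by (rule sum.cong) (auto intro: eq)
  then show "emeasure \<mu>1 (prod_emb UNIV (\<lambda>_. count_space {..<m}) J (PiE J A)) =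
         emeasure \<mu>2 (prod_emb UNIV (\<lambda>_. count_space {..<m}) J (PiE J A))"
    using union[OF s1 f1] union[OF s2 f2] prod_emb_eq_UN_cyl[OF N] A by simp
qed

locale shift_prob =
  fixes m :: nat and \<mu> :: "(nat \<Rightarrow> nat) measure"
  assumes sets_mu: "sets \<mu> = sets (shift_space m)" and prob: "prob_space \<mu>"
begin

interpretation prob_space \<mu> by (rule prob)

lemma space_mu: "space \<mu> = space (shift_space m)"
  using sets_mu by (rule sets_eq_imp_space_eq)

lemma cyl_in_sets [simp]: "cyl m w \<in> sets \<mu>"
  using sets_cyl sets_mu by simp

abbreviation p where "p w \<equiv> measure \<mu> (cyl m w)"

lemma p_Nil: "p [] = 1"
  using prob_space by (simp add: cyl_Nil space_mu[symmetric])

lemma p_eq_sum_snoc: "p w = (\<Sum>a<m. p (w @ [a]))"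
proof -
  have "p w = measure \<mu> (\<Union>a\<in>{..<m}. cyl m (w @ [a]))"
    using cyl_eq_UN_snoc[of m w] by simp
  also have "\<dots> = (\<Sum>a<m. p (w @ [a]))"
    by (rule finite_measure_finite_Union) (auto intro: disjoint_family_cyl_snoc)
  finally show ?thesis .
qed

lemma p_append_le: "p (w @ v) \<le> p w"
  by (rule finite_measure_mono[OF cyl_append_subset]) simp

lemma sum_p_words: "(\<Sum>w\<in>words m n. p w) = 1"
  by (induction n) (simp_all add: words_0 p_Nil sum_words_snoc p_eq_sum_snoc[symmetric])

end

locale shift_inv = shift_prob +
  assumes inv: "distr \<mu> (shift_space m) shift = \<mu>"
begin

interpretation prob_space \<mu> by (rule prob)

lemma p_eq_sum_Cons: "p w = (\<Sum>a<m. p (a # w))"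
proof -
  have "p w = measure (distr \<mu> (shift_space m) shift) (cyl m w)" using inv by simp
  also have "\<dots> = measure \<mu> (shift -` cyl m w \<inter> space \<mu>)"
    by (rule measure_distr) (auto simp: measurable_cong_sets[OF sets_mu refl])
  also have "\<dots> = measure \<mu> (\<Union>a\<in>{..<m}. cyl m (a # w))"
    using shift_vimage_cyl[of m w] by (simp add: space_mu)
  also have "\<dots> = (\<Sum>a<m. p (a # w))"
    by (rule finite_measure_finite_Union) (auto intro: disjoint_family_cyl_Cons)
  finally show ?thesis .
qed

end

lemma inv_measuresD: "\<mu> \<in> inv_measures m \<Longrightarrow> shift_inv m \<mu>"
  unfolding inv_measures_def shift_inv_def shift_inv_axioms_def shift_prob_def by auto

section \<open>Entropy as a limit of conditional entropies\<close>

lemma sum_decseq_le: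
  fixes c :: "nat \<Rightarrow> real"
  assumes dec: "decseq c" and "N \<le> n"
  shows "(\<Sum>j<n. c j) \<le> real N * c 0 + real (n - N) * c N"
proof -
  have "(\<Sum>j<n. c j) = (\<Sum>j<N. c j) + (\<Sum>j\<in>{N..<n}. c j)"
    using sum.atLeastLessThan_concat[of 0 N n c] \<open>N \<le> n\<close> by (simp add: atLeast0LessThan)
  also have "\<dots> \<le> (\<Sum>j<N. c 0) + (\<Sum>j\<in>{N..<n}. c N)"
    using dec by (intro add_mono sum_mono) (auto simp: decseq_def)
  finally show ?thesis by simp
qed

lemma cesaro_mean_decseq:
  fixes c :: "nat \<Rightarrow> real"
  assumes dec: "decseq c" and lim: "c \<longlonglongrightarrow> L"
  shows "(\<lambda>n. (1 / real n) * (\<Sum>j<n. c j)) \<longlonglongrightarrow> L"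
proof (rule LIMSEQ_I)
  fix \<epsilon> :: real assume "0 < \<epsilon>"
  define d where "d j = c j - L" for j
  have d_nonneg: "0 \<le> d j" for j unfolding d_def using decseq_ge[OF dec lim] by simp
  have "decseq d" using dec by (simp add: decseq_def d_def)
  from LIMSEQ_D[OF lim, of "\<epsilon> / 2"] \<open>0 < \<epsilon>\<close> obtain N where "norm (c N - L) < \<epsilon> / 2"
    by auto
  then have N: "d N < \<epsilon> / 2"
    using abs_ge_self[of "c N - L"] unfolding d_def real_norm_def by linarith
  have "eventually (\<lambda>n. real N * d 0 / real n < \<epsilon> / 2) sequentially"
    using order_tendstoD(2)[OF lim_const_over_n[of "real N * d 0"], of "\<epsilon> / 2"] \<open>0 < \<epsilon>\<close> by simp
  then obtain M where M: "\<And>n. n \<ge> M \<Longrightarrow> real N * d 0 / real n < \<epsilon> / 2"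
    unfolding eventually_sequentially by blast
  show "\<exists>no. \<forall>n\<ge>no. norm ((1 / real n) * (\<Sum>j<n. c j) - L) < \<epsilon>"
  proof (intro exI allI impI)
    fix n assume n: "max M (Suc N) \<le> n"
    then have "real n > 0" "N \<le> n" by auto
    have mean: "(1 / real n) * (\<Sum>j<n. c j) - L = (1 / real n) * (\<Sum>j<n. d j)"
      using \<open>real n > 0\<close> by (simp add: d_def sum_subtractf field_simps)
    have "(\<Sum>j<n. d j) \<le> real N * d 0 + real (n - N) * d N"
      by (rule sum_decseq_le[OF \<open>decseq d\<close> \<open>N \<le> n\<close>])
    also have "\<dots> \<le> real N * d 0 + real n * d N"
      using d_nonneg[of N] by (intro add_left_mono mult_right_mono) auto
    finally have "(1 / real n) * (\<Sum>j<n. d j) \<le> real N * d 0 / real n + d N"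
      using \<open>real n > 0\<close> by (simp add: field_simps)
    also have "\<dots> < \<epsilon>"
    proof -
      have "real N * d 0 / real n < \<epsilon> / 2" using n by (intro M) simp
      then show ?thesis using N by linarith
    qed
    finally show "norm ((1 / real n) * (\<Sum>j<n. c j) - L) < \<epsilon>"
      using mean d_nonneg \<open>real n > 0\<close> by (simp add: sum_nonneg)
  qed
qed

context shift_prob
begin

definition block_entropy :: "nat \<Rightarrow> real" where
  "block_entropy n = (\<Sum>w\<in>words m n. - p w * ln (p w))"

text \<open>The conditional entropy of the \<open>(n+1)\<close>-st symbol given the first \<open>n\<close>.\<close>
definition cond_entropy :: "nat \<Rightarrow> real" where
  "cond_entropy n = (\<Sum>w\<in>words m n. \<Sum>a<m. - kl_term (p (w @ [a])) (p w))"

lemma sum_entropy_snoc: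
  "(\<Sum>a<m. - p (w @ [a]) * ln (p (w @ [a])))
     = - p w * ln (p w) + (\<Sum>a<m. - kl_term (p (w @ [a])) (p w))"
  using sum_kl_term_total[of "{..<m}" "\<lambda>a. p (w @ [a])"]
  by (simp add: p_eq_sum_snoc[symmetric] sum_negf)

lemma block_entropy_eq_sum_cond_entropy: "block_entropy n = (\<Sum>j<n. cond_entropy j)"
proof (induction n)
  case (Suc n)
  have "block_entropy (Suc n) = block_entropy n + cond_entropy n"
    unfolding block_entropy_def cond_entropy_def sum_words_snoc sum_entropy_snoc
    by (rule sum.distrib)
  with Suc show ?case by simp
qed (simp add: block_entropy_def words_0 p_Nil)

lemma cond_entropy_nonneg: "0 \<le> cond_entropy n"
  unfolding cond_entropy_def
  by (intro sum_nonneg) (simp add: kl_term_nonpos p_append_le)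

end

context shift_inv
begin

text \<open>Invariance writes \<open>p w\<close> as \<open>\<Sigma>\<^sub>b p (b # w)\<close>; the log-sum inequality then compares
  conditioning on \<open>b # w\<close> with conditioning on \<open>w\<close> alone.\<close>
lemma cond_entropy_Suc_le: "cond_entropy (Suc n) \<le> cond_entropy n"
proof -
  have "cond_entropy (Suc n)
      = (\<Sum>b<m. \<Sum>w\<in>words m n. \<Sum>a<m. - kl_term (p (b # w @ [a])) (p (b # w)))"
    unfolding cond_entropy_def sum_words_Cons by simp
  also have "\<dots> = (\<Sum>w\<in>words m n. \<Sum>a<m. \<Sum>b<m. - kl_term (p (b # w @ [a])) (p (b # w)))"
    by (subst sum.swap) (rule sum.cong[OF refl], rule sum.swap)
  also have "\<dots> \<le> (\<Sum>w\<in>words m n. \<Sum>a<m. - kl_term (p (w @ [a])) (p w))"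
  proof (intro sum_mono)
    fix w a
    have "kl_term (\<Sum>b<m. p (b # w @ [a])) (\<Sum>b<m. p (b # w))
        \<le> (\<Sum>b<m. kl_term (p (b # w @ [a])) (p (b # w)))"
      by (rule kl_term_sum_le) (auto intro: p_append_le[of "_ # w" "[a]", simplified])
    then show "(\<Sum>b<m. - kl_term (p (b # w @ [a])) (p (b # w))) \<le> - kl_term (p (w @ [a])) (p w)"
      by (simp add: p_eq_sum_Cons[symmetric] sum_negf)
  qed
  also have "\<dots> = cond_entropy n" unfolding cond_entropy_def ..
  finally show ?thesis .
qed

lemma decseq_cond_entropy: "decseq cond_entropy"
  using cond_entropy_Suc_le by (simp add: decseq_Suc_iff)

lemma cond_entropy_LIMSEQ: "cond_entropy \<longlonglongrightarrow> lim cond_entropy"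
proof -
  have "Bseq cond_entropy"
  proof (rule BseqI')
    fix n
    show "norm (cond_entropy n) \<le> cond_entropy 0"
      using decseq_cond_entropy cond_entropy_nonneg[of n] by (simp add: decseq_def)
  qed
  moreover have "monoseq cond_entropy"
    using decseq_cond_entropy unfolding monoseq_def decseq_def by blast
  ultimately show ?thesis using Bseq_monoseq_convergent convergent_LIMSEQ_iff by blast
qed

lemma ms_entropy_eq_lim_cond_entropy: "ms_entropy m \<mu> = lim cond_entropy"
proof -
  have "(\<lambda>n. (1 / real n) * block_entropy n) \<longlonglongrightarrow> lim cond_entropy"
    unfolding block_entropy_eq_sum_cond_entropy
    by (rule cesaro_mean_decseq[OF decseq_cond_entropy cond_entropy_LIMSEQ])
  then show ?thesis unfolding ms_entropy_def block_entropy_def[symmetric] by (rule limI)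
qed

lemma ms_entropy_le_cond_entropy: "ms_entropy m \<mu> \<le> cond_entropy n"
  unfolding ms_entropy_eq_lim_cond_entropy
  by (rule decseq_ge[OF decseq_cond_entropy cond_entropy_LIMSEQ])

lemma ms_entropy_eq_cond_entropy:
  assumes "\<And>n. n \<ge> N \<Longrightarrow> cond_entropy n = cond_entropy N"
  shows "ms_entropy m \<mu> = cond_entropy N"
proof -
  have "(\<lambda>n. cond_entropy (n + N)) = (\<lambda>n. cond_entropy N)"
    by (rule ext, rule assms) simp
  then have "(\<lambda>n. cond_entropy (n + N)) \<longlonglongrightarrow> cond_entropy N" by simp
  then have "cond_entropy \<longlonglongrightarrow> cond_entropy N" by (rule LIMSEQ_offset)
  then show ?thesis unfolding ms_entropy_eq_lim_cond_entropy by (rule limI)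
qed

end

section \<open>The Markov measure extending a stationary block distribution\<close>

definition stationary_blocks :: "nat \<Rightarrow> nat \<Rightarrow> (nat list \<Rightarrow> real) \<Rightarrow> bool" where
  "stationary_blocks m k \<pi> \<longleftrightarrow>
     (\<forall>u\<in>words m (k - 1). (\<Sum>a<m. \<pi> (a # u)) = (\<Sum>a<m. \<pi> (u @ [a])))"

locale stationary_block_law =
  fixes m k :: nat and \<pi> :: "nat list \<Rightarrow> real"
  assumes m_pos: "m > 0" and k_pos: "k \<ge> 1"
    and nonneg: "\<And>w. w \<in> words m k \<Longrightarrow> 0 \<le> \<pi> w"
    and sum_eq_1: "(\<Sum>w\<in>words m k. \<pi> w) = 1"
    and stationary: "stationary_blocks m k \<pi>"
begin

definition prefix_prob :: "nat list \<Rightarrow> real" where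
  "prefix_prob v = (\<Sum>t\<in>words m (k - length v). \<pi> (v @ t))"

text \<open>After a null prefix any distribution would do; the point mass at \<open>0\<close> is used.\<close>
definition trans_prob :: "nat list \<Rightarrow> nat \<Rightarrow> real" where
  "trans_prob v a =
     (if prefix_prob v > 0 then prefix_prob (v @ [a]) / prefix_prob v else if a = 0 then 1 else 0)"

definition cond_prob :: "nat list \<Rightarrow> nat \<Rightarrow> real" where
  "cond_prob v a = trans_prob (drop (length v - (k - 1)) v) a"

definition markov_prob :: "nat list \<Rightarrow> real" where
  "markov_prob w = (\<Prod>i<length w. cond_prob (take i w) (w ! i))"

lemma prefix_prob_nonneg:
  assumes "v \<in> words m j" "j \<le> k"
  shows "0 \<le> prefix_prob v"
  unfolding prefix_prob_def
proof (intro sum_nonneg nonneg)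
  fix t assume "t \<in> words m (k - length v)"
  then show "v @ t \<in> words m k"
    using words_appendI[OF assms(1), of t "k - j"] assms by (simp add: length_words)
qed

lemma prefix_prob_eq_sum_snoc:
  assumes v: "v \<in> words m j" and "j < k"
  shows "prefix_prob v = (\<Sum>a<m. prefix_prob (v @ [a]))"
proof -
  have "k - length v = Suc (k - Suc j)" using assms by (simp add: length_words)
  then show ?thesis
    unfolding prefix_prob_def using v by (simp add: sum_words_Cons length_words)
qed

lemma prefix_prob_Nil: "prefix_prob [] = 1"
  unfolding prefix_prob_def using sum_eq_1 by simp

lemma prefix_prob_block: "v \<in> words m k \<Longrightarrow> prefix_prob v = \<pi> v"
  unfolding prefix_prob_def by (simp add: length_words words_0)

lemma sum_prefix_prob_Cons:
  assumes w: "w \<in> words m n" and n: "n \<le> k - 1"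
  shows "(\<Sum>a<m. prefix_prob (a # w)) = prefix_prob w"
proof -
  have "(\<Sum>a<m. prefix_prob (a # w)) = (\<Sum>t\<in>words m (k - Suc n). \<Sum>a<m. \<pi> (a # (w @ t)))"
    unfolding prefix_prob_def using w by (simp add: length_words) (rule sum.swap)
  also have "\<dots> = (\<Sum>t\<in>words m (k - Suc n). \<Sum>a<m. \<pi> ((w @ t) @ [a]))"
  proof (rule sum.cong[OF refl])
    fix t assume "t \<in> words m (k - Suc n)"
    moreover have "n + (k - Suc n) = k - 1" using n by arith
    ultimately have "w @ t \<in> words m (k - 1)" using words_appendI[OF w] by metis
    then show "(\<Sum>a<m. \<pi> (a # (w @ t))) = (\<Sum>a<m. \<pi> ((w @ t) @ [a]))"
      using stationary by (simp add: stationary_blocks_def)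
  qed
  also have "\<dots> = prefix_prob w"
  proof -
    have "k - length w = Suc (k - Suc n)" using w n k_pos by (simp add: length_words)
    then show ?thesis unfolding prefix_prob_def by (simp add: sum_words_snoc)
  qed
  finally show ?thesis .
qed

lemma trans_prob_nonneg:
  assumes "v \<in> words m j" "j < k" "a < m"
  shows "0 \<le> trans_prob v a"
  using prefix_prob_nonneg[OF words_snocI[OF assms(1) assms(3)]] assms
  unfolding trans_prob_def by auto

lemma sum_trans_prob:
  assumes "v \<in> words m j" "j < k"
  shows "(\<Sum>a<m. trans_prob v a) = 1"
proof (cases "prefix_prob v > 0")
  case True
  then show ?thesis
    unfolding trans_prob_def using prefix_prob_eq_sum_snoc[OF assms]
    by (simp add: sum_divide_distrib[symmetric])
qed (use m_pos in \<open>simp add: trans_prob_def\<close>)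

lemma cond_prob_nonneg: "v \<in> words m j \<Longrightarrow> a < m \<Longrightarrow> 0 \<le> cond_prob v a"
  unfolding cond_prob_def
  by (rule trans_prob_nonneg[OF drop_in_words[of v m j "k - 1"]]) (use k_pos in auto)

lemma sum_cond_prob: "v \<in> words m j \<Longrightarrow> (\<Sum>a<m. cond_prob v a) = 1"
  unfolding cond_prob_def
  by (rule sum_trans_prob[OF drop_in_words[of v m j "k - 1"]]) (use k_pos in auto)

lemma markov_prob_Nil: "markov_prob [] = 1"
  unfolding markov_prob_def by simp

lemma markov_prob_snoc: "markov_prob (w @ [a]) = markov_prob w * cond_prob w a"
proof -
  have "(\<Prod>i<length w. cond_prob (take i (w @ [a])) ((w @ [a]) ! i)) = markov_prob w"
    unfolding markov_prob_def by (rule prod.cong) (auto simp: nth_append)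
  then show ?thesis unfolding markov_prob_def by (simp add: lessThan_Suc)
qed

lemma markov_prob_nonneg: "w \<in> words m n \<Longrightarrow> 0 \<le> markov_prob w"
proof (induction w arbitrary: n rule: rev_induct)
  case (snoc a w)
  then have "w \<in> words m (length w)" "a < m" unfolding words_def by auto
  with snoc.IH show ?case by (simp add: markov_prob_snoc cond_prob_nonneg)
qed (simp add: markov_prob_Nil)

lemma markov_prob_eq_prefix_prob: "w \<in> words m j \<Longrightarrow> j \<le> k \<Longrightarrow> markov_prob w = prefix_prob w"
proof (induction w arbitrary: j rule: rev_induct)
  case (snoc a w)
  have w: "w \<in> words m (length w)" and a: "a < m" and lw: "length w < k"
    using snoc.prems by (auto simp: words_def)
  have IH: "markov_prob w = prefix_prob w" using snoc.IH[OF w] lw by simp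
  have cond: "cond_prob w a = trans_prob w a" unfolding cond_prob_def using lw by simp
  show ?case
  proof (cases "prefix_prob w > 0")
    case False
    then have "prefix_prob w = 0" using prefix_prob_nonneg[OF w] lw by simp
    then have "(\<Sum>b<m. prefix_prob (w @ [b])) = 0" using prefix_prob_eq_sum_snoc[OF w lw] by simp
    moreover have "\<forall>b\<in>{..<m}. 0 \<le> prefix_prob (w @ [b])"
      using prefix_prob_nonneg[OF words_snocI[OF w]] lw by simp
    ultimately have "prefix_prob (w @ [a]) = 0"
      using a sum_nonneg_eq_0_iff[of "{..<m}" "\<lambda>b. prefix_prob (w @ [b])"] by simp
    then show ?thesis using \<open>prefix_prob w = 0\<close> IH by (simp add: markov_prob_snoc)
  qed (simp add: markov_prob_snoc IH cond trans_prob_def)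
qed (simp add: markov_prob_Nil prefix_prob_Nil)

lemma markov_prob_block: "w \<in> words m k \<Longrightarrow> markov_prob w = \<pi> w"
  using markov_prob_eq_prefix_prob prefix_prob_block by simp

text \<open>Up to length \<open>k - 1\<close> this is stationarity of \<open>\<pi>\<close>; beyond it the last symbol only
  depends on the \<open>k - 1\<close> symbols before it, so it can be split off.\<close>
lemma sum_markov_prob_Cons: "w \<in> words m n \<Longrightarrow> (\<Sum>a<m. markov_prob (a # w)) = markov_prob w"
proof (induction w arbitrary: n rule: rev_induct)
  case Nil
  have "markov_prob [a] = prefix_prob [a]" if "a < m" for a
    using that by (intro markov_prob_eq_prefix_prob[of _ "Suc 0"]) (use k_pos in \<open>auto simp: words_def\<close>)
  then show ?case using sum_prefix_prob_Cons[of "[]" 0]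
    by (simp add: words_0 markov_prob_Nil prefix_prob_Nil)
next
  case (snoc b w)
  have w: "w \<in> words m (length w)" and b: "b < m" and n: "n = Suc (length w)"
    using snoc.prems by (auto simp: words_def)
  show ?case
  proof (cases "Suc (length w) \<le> k - 1")
    case True
    have "markov_prob (a # w @ [b]) = prefix_prob (a # w @ [b])" if "a < m" for a
      using True that w b by (intro markov_prob_eq_prefix_prob[of _ "Suc (Suc (length w))"])
        (auto intro: words_ConsI words_snocI)
    then have "(\<Sum>a<m. markov_prob (a # w @ [b])) = (\<Sum>a<m. prefix_prob (a # w @ [b]))"
      by (intro sum.cong) auto
    also have "\<dots> = prefix_prob (w @ [b])"
      using sum_prefix_prob_Cons[OF snoc.prems] True n by simp
    also have "\<dots> = markov_prob (w @ [b])"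
      using markov_prob_eq_prefix_prob[OF snoc.prems] True n by simp
    finally show ?thesis by simp
  next
    case False
    then have "cond_prob (a # w) b = cond_prob w b" for a
      unfolding cond_prob_def by (simp add: Suc_diff_le)
    then have "markov_prob (a # w @ [b]) = markov_prob (a # w) * cond_prob w b" for a
      using markov_prob_snoc[of "a # w" b] by simp
    then show ?thesis
      using snoc.IH[OF w] by (simp add: markov_prob_snoc sum_distrib_right[symmetric])
  qed
qed

lemma sum_markov_prob_prepend:
  "u \<in> words m n \<Longrightarrow> (\<Sum>v\<in>words m j. markov_prob (v @ u)) = markov_prob u"
proof (induction j)
  case (Suc j)
  have "(\<Sum>v\<in>words m (Suc j). markov_prob (v @ u)) = (\<Sum>v\<in>words m j. \<Sum>a<m. markov_prob (a # (v @ u)))"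
    by (simp add: sum_words_Cons) (rule sum.swap)
  also have "\<dots> = (\<Sum>v\<in>words m j. markov_prob (v @ u))"
    using words_appendI Suc.prems by (intro sum.cong refl sum_markov_prob_Cons) blast
  finally show ?case using Suc by simp
qed (simp add: words_0)

end

lemma fun_upd_in_PiE_singletons:
  assumes "x \<in> extensional {0..<length v}"
  shows "x(length v := b) \<in> PiE {0..<Suc (length v)} (\<lambda>i. {(v @ [a]) ! i})
           \<longleftrightarrow> x \<in> PiE {0..<length v} (\<lambda>i. {v ! i}) \<and> b = a"
  using assms by (auto simp: PiE_iff nth_append extensional_def)

context stationary_block_law
begin

definition alphabet :: "nat \<Rightarrow> nat measure" where
  "alphabet = (\<lambda>_. count_space {..<m})"

definition kernel :: "nat \<Rightarrow> (nat \<Rightarrow> nat) \<Rightarrow> nat measure" where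
  "kernel i x = point_measure {..<m} (\<lambda>a. ennreal (cond_prob (map x [0..<i]) a))"

lemma PiM_alphabet: "PiM {0..<i} alphabet = count_space (PiE {0..<i} (\<lambda>_. {..<m}))"
  unfolding alphabet_def by (rule count_space_PiM_finite) auto

lemma map_in_words: "x \<in> space (PiM {0..<i} alphabet) \<Longrightarrow> map x [0..<i] \<in> words m i"
  unfolding alphabet_def words_def by (auto simp: space_PiM PiE_iff)

lemma emeasure_kernel: "X \<subseteq> {..<m} \<Longrightarrow> emeasure (kernel i x) X = (\<Sum>a\<in>X. ennreal (cond_prob (map x [0..<i]) a))"
  unfolding kernel_def by (rule emeasure_point_measure_finite) auto

lemma prob_space_kernel:
  assumes x: "x \<in> space (PiM {0..<i} alphabet)"
  shows "prob_space (kernel i x)"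
proof (rule prob_spaceI)
  have "emeasure (kernel i x) {..<m} = (\<Sum>a<m. ennreal (cond_prob (map x [0..<i]) a))"
    by (simp add: emeasure_kernel)
  also have "\<dots> = ennreal (\<Sum>a<m. cond_prob (map x [0..<i]) a)"
    using cond_prob_nonneg[OF map_in_words[OF x]] by (intro sum_ennreal) auto
  finally show "emeasure (kernel i x) (space (kernel i x)) = 1"
    using sum_cond_prob[OF map_in_words[OF x]] by (simp add: kernel_def space_point_measure)
qed

lemma kernel_measurable: "kernel i \<in> measurable (PiM {0..<i} alphabet) (subprob_algebra (alphabet i))"
proof (rule measurable_subprob_algebra)
  show "subprob_space (kernel i x)" if "x \<in> space (PiM {0..<i} alphabet)" for x
    using prob_space_kernel[OF that] by (rule prob_space_imp_subprob_space)
  show "sets (kernel i x) = sets (alphabet i)" for x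
    unfolding kernel_def alphabet_def by (simp add: sets_point_measure)
  show "(\<lambda>x. emeasure (kernel i x) A) \<in> borel_measurable (PiM {0..<i} alphabet)" for A
    unfolding PiM_alphabet by simp
qed

sublocale IT: Ionescu_Tulcea kernel alphabet
  unfolding Ionescu_Tulcea_def using kernel_measurable prob_space_kernel by blast

definition markov_ext :: "(nat \<Rightarrow> nat) measure" where
  "markov_ext = IT.PF.lim"

lemma sets_markov_ext: "sets markov_ext = sets (shift_space m)"
  using IT.PF.sets_lim by (simp add: markov_ext_def shift_space_def alphabet_def)

lemma PiE_singletons_in_sets:
  "w \<in> words m n \<Longrightarrow> PiE {0..<n} (\<lambda>i. {w ! i}) \<in> sets (PiM {0..<n} alphabet)"
  unfolding PiM_alphabet by (auto simp: words_def PiE_iff subset_iff dest: nth_mem)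

lemma emeasure_eP_PiE_singletons:
  assumes v: "v \<in> words m j" and a: "a < m" and x: "x \<in> space (PiM {0..<j} alphabet)"
  shows "emeasure (IT.eP j x) (PiE {0..<Suc j} (\<lambda>i. {(v @ [a]) ! i}))
           = ennreal (cond_prob v a) * indicator (PiE {0..<j} (\<lambda>i. {v ! i})) x"
proof -
  let ?X = "PiE {0..<Suc j} (\<lambda>i. {(v @ [a]) ! i})"
  let ?Xv = "PiE {0..<j} (\<lambda>i. {v ! i})"
  have j: "j = length v" using v by (simp add: length_words)
  have X: "?X \<in> sets (PiM {0..<Suc j} alphabet)"
    using PiE_singletons_in_sets[OF words_snocI[OF v a]] by simp
  have "x \<in> extensional {0..<j}" using x by (simp add: space_PiM PiE_iff)
  note iff = fun_upd_in_PiE_singletons[OF this[unfolded j], of _ a, folded j]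
  have "(\<lambda>b. x(j := b)) -` ?X \<inter> space (alphabet j) = (if x \<in> ?Xv then {a} else {})"
    by (cases "x \<in> ?Xv") (simp_all add: alphabet_def iff set_eq_iff, use a in blast)
  moreover have "map x [0..<j] = v" if "x \<in> ?Xv"
    using that j by (intro nth_equalityI) (auto simp: PiE_iff)
  ultimately show ?thesis
    using IT.emeasure_eP[OF x X] a by (simp add: emeasure_kernel)
qed

lemma emeasure_C_PiE_singletons:
  assumes "w \<in> words m n"
  shows "emeasure (IT.C 0 n (\<lambda>_. undefined)) (PiE {0..<n} (\<lambda>i. {w ! i})) = ennreal (markov_prob w)"
  using assms
proof (induction w arbitrary: n rule: rev_induct)
  case Nil
  then show ?case by (simp add: words_def markov_prob_Nil PiM_empty emeasure_return)
next
  case (snoc a v)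
  have n: "n = Suc (length v)" and v: "v \<in> words m (length v)" and a: "a < m"
    using snoc.prems by (auto simp: words_def)
  let ?X = "PiE {0..<Suc (length v)} (\<lambda>i. {(v @ [a]) ! i})"
  let ?C = "IT.C 0 (length v) (\<lambda>_. undefined)"
  have u: "(\<lambda>_. undefined) \<in> space (PiM {0..<0} alphabet)" by (simp add: space_PiM)
  have "emeasure (IT.C 0 (Suc (length v)) (\<lambda>_. undefined)) ?X = emeasure (?C \<bind> IT.eP (length v)) ?X"
    by simp
  also have "\<dots> = (\<integral>\<^sup>+x. emeasure (IT.eP (length v) x) ?X \<partial>?C)"
    using prob_space.not_empty[OF IT.prob_space_C[OF u]] PiE_singletons_in_sets[OF snoc.prems] n
    by (intro emeasure_bind) (simp_all add: measurable_cong_sets[OF IT.sets_C[OF u] refl])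
  also have "\<dots> = (\<integral>\<^sup>+x. ennreal (cond_prob v a) * indicator (PiE {0..<length v} (\<lambda>i. {v ! i})) x \<partial>?C)"
    using IT.space_C[OF u] by (intro nn_integral_cong emeasure_eP_PiE_singletons[OF v a]) simp
  also have "\<dots> = ennreal (cond_prob v a) * ennreal (markov_prob v)"
    using PiE_singletons_in_sets[OF v] snoc.IH[OF v]
    by (simp add: nn_integral_cmult_indicator IT.sets_C[OF u])
  also have "\<dots> = ennreal (markov_prob (v @ [a]))"
    using cond_prob_nonneg[OF v a] markov_prob_nonneg[OF v]
    by (simp add: markov_prob_snoc ennreal_mult mult.commute)
  finally show ?case unfolding n .
qed

lemma cyl_eq_prod_emb:
  "w \<in> words m n \<Longrightarrow> cyl m w = prod_emb UNIV alphabet {0..<n} (PiE {0..<n} (\<lambda>i. {w ! i}))"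
  unfolding cyl_def by (auto simp: prod_emb_iff PiE_iff alphabet_def space_shift_space length_words)

lemma emeasure_markov_ext_cyl:
  assumes w: "w \<in> words m n"
  shows "emeasure markov_ext (cyl m w) = ennreal (markov_prob w)"
proof -
  let ?X = "PiE {0..<n} (\<lambda>i. {w ! i})"
  have X: "?X \<in> sets (PiM {0..<n} alphabet)" by (rule PiE_singletons_in_sets[OF w])
  have "emeasure markov_ext (cyl m w) = emeasure (IT.CI {0..<n}) ?X"
    unfolding markov_ext_def cyl_eq_prod_emb[OF w] by (rule IT.lim) (auto simp: X)
  also have "\<dots> = emeasure (IT.C 0 n (\<lambda>_. undefined)) (prod_emb {0..<n} alphabet {0..<n} ?X)"
    by (rule IT.emeasure_CI) (auto simp: X)
  also have "prod_emb {0..<n} alphabet {0..<n} ?X = ?X"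
    using sets.sets_into_space[OF X] by (intro prod_emb_id) (simp add: space_PiM)
  finally show ?thesis using emeasure_C_PiE_singletons[OF w] by simp
qed

lemma measure_markov_ext_cyl: "w \<in> words m n \<Longrightarrow> measure markov_ext (cyl m w) = markov_prob w"
  using emeasure_markov_ext_cyl markov_prob_nonneg by (simp add: measure_def)

lemma prob_space_markov_ext: "prob_space markov_ext"
proof (rule prob_spaceI)
  have "space markov_ext = cyl m []"
    using sets_eq_imp_space_eq[OF sets_markov_ext] by (simp add: cyl_Nil)
  then show "emeasure markov_ext (space markov_ext) = 1"
    using emeasure_markov_ext_cyl[of "[]" 0] by (simp add: words_0 markov_prob_Nil)
qed

lemma markov_ext_invariant: "distr markov_ext (shift_space m) shift = markov_ext"
proof (rule measure_eqI_cyl)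
  interpret prob_space markov_ext by (rule prob_space_markov_ext)
  have meas: "shift \<in> measurable markov_ext (shift_space m)"
    using shift_measurable by (simp add: measurable_cong_sets[OF sets_markov_ext refl])
  show "sets (distr markov_ext (shift_space m) shift) = sets (shift_space m)"
       "sets markov_ext = sets (shift_space m)" "finite_measure markov_ext"
    by (simp_all add: sets_markov_ext finite_measure_axioms)
  show "finite_measure (distr markov_ext (shift_space m) shift)"
    using prob_space_distr[OF meas] by (simp add: prob_space_def)
  fix n w assume w: "w \<in> words m n"
  have "measure (distr markov_ext (shift_space m) shift) (cyl m w)
      = measure markov_ext (\<Union>a\<in>{..<m}. cyl m (a # w))"
    using measure_distr[OF meas, of "cyl m w"] shift_vimage_cyl[of m w]
      sets_eq_imp_space_eq[OF sets_markov_ext] by simp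
  also have "\<dots> = (\<Sum>a<m. measure markov_ext (cyl m (a # w)))"
    by (rule finite_measure_finite_Union) (auto intro: disjoint_family_cyl_Cons simp: sets_markov_ext)
  also have "\<dots> = (\<Sum>a<m. markov_prob (a # w))"
    by (intro sum.cong refl measure_markov_ext_cyl[OF words_ConsI[OF w]]) auto
  also have "\<dots> = measure markov_ext (cyl m w)"
    using sum_markov_prob_Cons[OF w] measure_markov_ext_cyl[OF w] by simp
  finally show "measure (distr markov_ext (shift_space m) shift) (cyl m w) = measure markov_ext (cyl m w)" .
qed

lemma markov_ext_in_inv_measures: "markov_ext \<in> inv_measures m"
  unfolding inv_measures_def
  using sets_markov_ext prob_space_markov_ext markov_ext_invariant by auto

lemma markov_measure_markov_ext: "markov_measure m (k - 1) markov_ext"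
  unfolding markov_measure_def
proof (intro conjI markov_ext_in_inv_measures exI allI impI ballI)
  fix n w a assume w: "w \<in> words m (n - 1)" and a: "a < m"
  show "measure markov_ext (cyl m (w @ [a]))
      = measure markov_ext (cyl m w) * (\<lambda>_. trans_prob) n (drop (length w - (k - 1)) w) a"
    using measure_markov_ext_cyl[OF words_snocI[OF w a]] measure_markov_ext_cyl[OF w]
    by (simp add: markov_prob_snoc cond_prob_def)
qed

lemma measure_markov_ext_block: "w \<in> words m k \<Longrightarrow> measure markov_ext (cyl m w) = \<pi> w"
  using measure_markov_ext_cyl markov_prob_block by simp

definition trans_entropy :: "nat list \<Rightarrow> real" where
  "trans_entropy u = (\<Sum>a<m. - kl_term (cond_prob u a) 1)"

lemma cond_entropy_markov_ext_eq:
  "shift_prob.cond_entropy m markov_ext n = (\<Sum>w\<in>words m n. markov_prob w * trans_entropy w)"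
proof -
  interpret N: shift_inv m markov_ext by (rule inv_measuresD[OF markov_ext_in_inv_measures])
  show ?thesis
    unfolding N.cond_entropy_def
  proof (rule sum.cong[OF refl])
    fix w assume w: "w \<in> words m n"
    have "N.p (w @ [a]) = markov_prob w * cond_prob w a" if "a < m" for a
      using measure_markov_ext_cyl[OF words_snocI[OF w that]] by (simp add: markov_prob_snoc)
    then show "(\<Sum>a<m. - kl_term (N.p (w @ [a])) (N.p w)) = markov_prob w * trans_entropy w"
      using measure_markov_ext_cyl[OF w] markov_prob_nonneg[OF w]
      by (simp add: trans_entropy_def kl_term_scale sum_distrib_left)
  qed
qed

text \<open>From \<open>k - 1\<close> on, the conditional entropy of the Markov measure only sees the last
  \<open>k - 1\<close> symbols, whose law is the same at every position by stationarity.\<close>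
lemma cond_entropy_markov_ext:
  assumes "n \<ge> k - 1"
  shows "shift_prob.cond_entropy m markov_ext n = shift_prob.cond_entropy m markov_ext (k - 1)"
proof -
  obtain j where j: "n = j + (k - 1)" using assms by (metis le_add_diff_inverse2)
  have "(\<Sum>w\<in>words m n. markov_prob w * trans_entropy w)
      = (\<Sum>v\<in>words m j. \<Sum>u\<in>words m (k - 1). markov_prob (v @ u) * trans_entropy (v @ u))"
    unfolding j by (rule sum_words_add)
  also have "\<dots> = (\<Sum>v\<in>words m j. \<Sum>u\<in>words m (k - 1). markov_prob (v @ u) * trans_entropy u)"
    by (intro sum.cong refl) (simp add: trans_entropy_def cond_prob_def length_words)
  also have "\<dots> = (\<Sum>u\<in>words m (k - 1). \<Sum>v\<in>words m j. markov_prob (v @ u) * trans_entropy u)"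
    by (rule sum.swap)
  also have "\<dots> = (\<Sum>u\<in>words m (k - 1). markov_prob u * trans_entropy u)"
    by (intro sum.cong refl) (simp add: sum_distrib_right[symmetric] sum_markov_prob_prepend)
  finally show ?thesis unfolding cond_entropy_markov_ext_eq .
qed


end

section \<open>Integrals of functions of the first \<open>k\<close> coordinates\<close>

definition block_tuples :: "nat \<Rightarrow> nat \<Rightarrow> nat \<Rightarrow> (nat \<Rightarrow> nat list) set" where
  "block_tuples m r k = PiE {..<r} (\<lambda>_. words m k)"

definition block_point :: "nat \<Rightarrow> nat \<Rightarrow> (nat \<Rightarrow> nat list) \<Rightarrow> nat \<Rightarrow> nat \<Rightarrow> nat" where
  "block_point r k ws = restrict (\<lambda>i j. if j < k then ws i ! j else 0) {..<r}"

definition block_poly ::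
  "nat \<Rightarrow> nat \<Rightarrow> nat \<Rightarrow> ((nat \<Rightarrow> nat \<Rightarrow> nat) \<Rightarrow> real) \<Rightarrow> (nat list \<Rightarrow> real) \<Rightarrow> real" where
  "block_poly m r k \<Phi> \<pi> = (\<Sum>ws\<in>block_tuples m r k. \<Phi> (block_point r k ws) * (\<Prod>i<r. \<pi> (ws i)))"

lemma finite_block_tuples: "finite (block_tuples m r k)"
  unfolding block_tuples_def by (intro finite_PiE) (auto simp: finite_words)

lemma block_poly_cong:
  assumes "\<And>w. w \<in> words m k \<Longrightarrow> \<pi>1 w = \<pi>2 w"
  shows "block_poly m r k \<Phi> \<pi>1 = block_poly m r k \<Phi> \<pi>2"
  unfolding block_poly_def block_tuples_def
  using assms by (intro sum.cong refl arg_cong2[where f="(*)"] prod.cong) auto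

lemma block_point_in_space:
  assumes "m > 0" and ws: "ws \<in> block_tuples m r k"
  shows "block_point r k ws \<in> space (PiM {..<r} (\<lambda>_. shift_space m))"
proof -
  have "ws i ! j < m" if "i < r" "j < k" for i j
  proof -
    have "ws i \<in> words m k" using ws that by (auto simp: block_tuples_def)
    then have "length (ws i) = k" "set (ws i) \<subseteq> {..<m}" by (auto simp: words_def)
    then show ?thesis using that by (metis lessThan_iff nth_mem subsetD)
  qed
  then show ?thesis
    using \<open>m > 0\<close> by (auto simp: block_point_def space_PiM space_shift_space)
qed

lemma in_cyl_iff_map:
  "y \<in> space (shift_space m) \<Longrightarrow> w \<in> words m k \<Longrightarrow> y \<in> cyl m w \<longleftrightarrow> w = map y [0..<k]"
  unfolding cyl_def by (auto simp: length_words list_eq_iff_nth_eq)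

lemma in_PiE_cyl_iff:
  assumes x: "x \<in> space (PiM {..<r} (\<lambda>_. shift_space m))" and ws: "ws \<in> block_tuples m r k"
  shows "x \<in> PiE {..<r} (\<lambda>i. cyl m (ws i)) \<longleftrightarrow> ws = restrict (\<lambda>i. map (x i) [0..<k]) {..<r}"
proof -
  have "x \<in> PiE {..<r} (\<lambda>i. cyl m (ws i)) \<longleftrightarrow> (\<forall>i<r. x i \<in> cyl m (ws i))"
    using x by (auto simp: space_PiM PiE_iff)
  also have "\<dots> \<longleftrightarrow> (\<forall>i<r. ws i = map (x i) [0..<k])"
  proof (intro all_cong imp_cong refl in_cyl_iff_map)
    fix i assume "i < r"
    then show "x i \<in> space (shift_space m)" "ws i \<in> words m k"
      using x ws by (auto simp: space_PiM block_tuples_def)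
  qed
  also have "\<dots> \<longleftrightarrow> ws = restrict (\<lambda>i. map (x i) [0..<k]) {..<r}"
    using ws unfolding block_tuples_def by (auto simp: PiE_def extensional_def fun_eq_iff)
  finally show ?thesis .
qed

lemma depends_on_first_eq_sum:
  assumes m: "m > 0" and dep: "depends_on_first m r k \<Phi>"
    and x: "x \<in> space (PiM {..<r} (\<lambda>_. shift_space m))"
  shows "\<Phi> x = (\<Sum>ws\<in>block_tuples m r k.
                   \<Phi> (block_point r k ws) * indicator (PiE {..<r} (\<lambda>i. cyl m (ws i))) x)"
proof -
  define ws0 where "ws0 = restrict (\<lambda>i. map (x i) [0..<k]) {..<r}"
  have ws0: "ws0 \<in> block_tuples m r k"
    using x unfolding ws0_def block_tuples_def words_def by (auto simp: space_PiM space_shift_space PiE_iff)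
  have "(\<Sum>ws\<in>block_tuples m r k. \<Phi> (block_point r k ws) * indicator (PiE {..<r} (\<lambda>i. cyl m (ws i))) x)
      = (\<Sum>ws\<in>block_tuples m r k. if ws = ws0 then \<Phi> (block_point r k ws) else 0)"
  proof (rule sum.cong[OF refl])
    fix ws assume "ws \<in> block_tuples m r k"
    then have "x \<in> PiE {..<r} (\<lambda>i. cyl m (ws i)) \<longleftrightarrow> ws = ws0"
      unfolding ws0_def by (rule in_PiE_cyl_iff[OF x])
    then show "\<Phi> (block_point r k ws) * indicator (PiE {..<r} (\<lambda>i. cyl m (ws i))) x
        = (if ws = ws0 then \<Phi> (block_point r k ws) else 0)"
      by (simp add: indicator_def)
  qed
  also have "\<dots> = \<Phi> (block_point r k ws0)"
    using ws0 finite_block_tuples by (simp add: sum.delta')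
  also have "\<dots> = \<Phi> x"
  proof -
    have "\<forall>i<r. \<forall>j<k. block_point r k ws0 i j = x i j"
      by (simp add: block_point_def ws0_def)
    then show ?thesis
      using dep block_point_in_space[OF m ws0] x unfolding depends_on_first_def by blast
  qed
  finally show ?thesis by simp
qed

lemma (in shift_prob) measure_PiM_PiE_cyl:
  fixes r :: nat
  shows "measure (PiM {..<r} (\<lambda>_. \<mu>)) (PiE {..<r} (\<lambda>i. cyl m (ws i))) = (\<Prod>i<r. p (ws i))"
proof -
  interpret prob_space \<mu> by (rule prob)
  interpret P: product_prob_space "\<lambda>_. \<mu>" "{..<r}" by unfold_locales
  have "emeasure (PiM {..<r} (\<lambda>_. \<mu>)) (PiE {..<r} (\<lambda>i. cyl m (ws i)))
      = (\<Prod>i<r. emeasure \<mu> (cyl m (ws i)))"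
    by (rule P.emeasure_PiM) auto
  also have "\<dots> = ennreal (\<Prod>i<r. p (ws i))"
    by (simp only: emeasure_eq_measure prod_ennreal measure_nonneg)
  finally have "ennreal (measure (PiM {..<r} (\<lambda>_. \<mu>)) (PiE {..<r} (\<lambda>i. cyl m (ws i))))
      = ennreal (\<Prod>i<r. p (ws i))"
    by (simp only: P.emeasure_eq_measure)
  then show ?thesis by (rule ennreal_inj[THEN iffD1, rotated 2]) (auto intro: prod_nonneg)
qed

lemma (in shift_prob) integral_eq_block_poly:
  assumes m: "m > 0" and dep: "depends_on_first m r k \<Phi>"
  shows "integral\<^sup>L (PiM {..<r} (\<lambda>_. \<mu>)) \<Phi> = block_poly m r k \<Phi> (\<lambda>w. p w)"
proof -
  interpret prob_space \<mu> by (rule prob)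
  interpret P: product_prob_space "\<lambda>_. \<mu>" "{..<r}" by unfold_locales
  let ?N = "PiM {..<r} (\<lambda>_. \<mu>)"
  let ?C = "\<lambda>ws. PiE {..<r} (\<lambda>i. cyl m (ws i))"
  have space: "space ?N = space (PiM {..<r} (\<lambda>_. shift_space m))"
    by (intro sets_eq_imp_space_eq sets_PiM_cong) (auto simp: sets_mu)
  have C: "?C ws \<in> sets ?N" for ws
    by (rule sets_PiM_I_finite) auto
  have "integral\<^sup>L ?N \<Phi> = integral\<^sup>L ?N (\<lambda>x. \<Sum>ws\<in>block_tuples m r k. \<Phi> (block_point r k ws) * indicator (?C ws) x)"
    using depends_on_first_eq_sum[OF m dep] by (intro Bochner_Integration.integral_cong) (auto simp: space)
  also have "\<dots> = (\<Sum>ws\<in>block_tuples m r k. integral\<^sup>L ?N (\<lambda>x. \<Phi> (block_point r k ws) * indicator (?C ws) x))"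
    using C by (intro Bochner_Integration.integral_sum integrable_mult_right integrable_real_indicator)
      (simp_all add: P.emeasure_eq_measure)
  also have "\<dots> = (\<Sum>ws\<in>block_tuples m r k. \<Phi> (block_point r k ws) * measure ?N (?C ws))"
    using C by (simp add: sets.Int_space_eq2)
  also have "\<dots> = block_poly m r k \<Phi> (\<lambda>w. p w)"
    unfolding block_poly_def measure_PiM_PiE_cyl ..
  finally show ?thesis .
qed

section \<open>Maximising the conditional entropy over block distributions\<close>

text \<open>Block distributions are extended by \<open>0\<close> outside \<open>words m k\<close>, so that they form a
  compact subset of the product space \<open>nat list \<Rightarrow> real\<close>.\<close>
definition block_box :: "nat \<Rightarrow> nat \<Rightarrow> (nat list \<Rightarrow> real) set" where
  "block_box m k = PiE UNIV (\<lambda>w. if w \<in> words m k then {0..1} else {0})"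

definition admissible_blocks ::
  "nat \<Rightarrow> nat \<Rightarrow> nat \<Rightarrow> ((nat \<Rightarrow> nat \<Rightarrow> nat) \<Rightarrow> real) \<Rightarrow> real \<Rightarrow> (nat list \<Rightarrow> real) set" where
  "admissible_blocks m r k \<Phi> \<alpha> = {\<pi> \<in> block_box m k.
     (\<Sum>w\<in>words m k. \<pi> w) = 1 \<and> stationary_blocks m k \<pi> \<and> block_poly m r k \<Phi> \<pi> = \<alpha>}"

definition block_cond_entropy :: "nat \<Rightarrow> nat \<Rightarrow> (nat list \<Rightarrow> real) \<Rightarrow> real" where
  "block_cond_entropy m k \<pi> =
     (\<Sum>u\<in>words m (k - 1). \<Sum>a<m. - kl_term (\<pi> (u @ [a])) (\<Sum>b<m. \<pi> (u @ [b])))"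

lemma block_box_nonneg: "\<pi> \<in> block_box m k \<Longrightarrow> 0 \<le> \<pi> w"
  unfolding block_box_def by (auto simp: PiE_iff split: if_splits)

lemma compact_block_box: "compact (block_box m k)"
proof -
  have "compactin (product_topology (\<lambda>_. euclidean) UNIV)
      (PiE UNIV (\<lambda>w::nat list. if w \<in> words m k then {0..1::real} else {0}))"
    by (subst compactin_PiE) auto
  then show ?thesis unfolding block_box_def euclidean_product_topology by simp
qed

lemma compact_admissible_blocks: "compact (admissible_blocks m r k \<Phi> \<alpha>)"
proof -
  have "closed {\<pi>::nat list \<Rightarrow> real. (\<Sum>w\<in>words m k. \<pi> w) = 1}"
    "closed {\<pi>::nat list \<Rightarrow> real. block_poly m r k \<Phi> \<pi> = \<alpha>}"
    "closed (\<Inter>u\<in>words m (k - 1). {\<pi>::nat list \<Rightarrow> real. (\<Sum>a<m. \<pi> (a # u)) = (\<Sum>a<m. \<pi> (u @ [a]))})"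
    unfolding block_poly_def
    by (intro closed_INT ballI closed_Collect_eq continuous_intros continuous_on_product_coordinates)+
  moreover have eq: "admissible_blocks m r k \<Phi> \<alpha> = block_box m k \<inter>
     ({\<pi>. (\<Sum>w\<in>words m k. \<pi> w) = 1} \<inter> {\<pi>. block_poly m r k \<Phi> \<pi> = \<alpha>} \<inter>
      (\<Inter>u\<in>words m (k - 1). {\<pi>. (\<Sum>a<m. \<pi> (a # u)) = (\<Sum>a<m. \<pi> (u @ [a]))}))"
    unfolding admissible_blocks_def stationary_blocks_def by auto
  ultimately show ?thesis
    unfolding eq by (intro compact_Int_closed compact_block_box closed_Int)
qed

lemma continuous_on_xlnx: "continuous_on {0..} (\<lambda>t::real. t * ln t)"
  unfolding continuous_on_eq_continuous_within
proof
  fix x :: real assume x: "x \<in> {0..}"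
  show "continuous (at x within {0..}) (\<lambda>t. t * ln t)"
  proof (cases "x = 0")
    case True
    have "((\<lambda>t::real. t * ln t) \<longlongrightarrow> 0) (at_right 0)" by real_asymp
    then show ?thesis unfolding True continuous_within at_within_Ici_at_right by simp
  next
    case False
    then have "isCont (\<lambda>t::real. t * ln t) x" using x by (intro continuous_intros) auto
    then show ?thesis by (rule continuous_at_imp_continuous_at_within)
  qed
qed

lemma block_cond_entropy_expand:
  "\<pi> \<in> block_box m k \<Longrightarrow> block_cond_entropy m k \<pi> =
     (\<Sum>u\<in>words m (k - 1). (\<Sum>b<m. \<pi> (u @ [b])) * ln (\<Sum>b<m. \<pi> (u @ [b]))
                            - (\<Sum>a<m. \<pi> (u @ [a]) * ln (\<pi> (u @ [a]))))"
  unfolding block_cond_entropy_def by (intro sum.cong refl sum_kl_term_total) (auto intro: block_box_nonneg)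

lemma continuous_on_block_cond_entropy: "continuous_on (block_box m k) (block_cond_entropy m k)"
proof -
  have xlnx: "continuous_on (block_box m k) (\<lambda>\<pi>. g \<pi> * ln (g \<pi>))"
    if "continuous_on UNIV g" "\<And>\<pi>. \<pi> \<in> block_box m k \<Longrightarrow> 0 \<le> g \<pi>"
    for g :: "(nat list \<Rightarrow> real) \<Rightarrow> real"
    using continuous_on_compose2[OF continuous_on_xlnx continuous_on_subset[OF that(1)]] that(2)
    by auto
  show ?thesis
    by (subst continuous_on_cong[OF refl block_cond_entropy_expand], assumption)
      (intro continuous_intros xlnx sum_nonneg block_box_nonneg; simp)
qed

lemma block_cond_entropy_cong:
  assumes "k \<ge> 1" "\<And>w. w \<in> words m k \<Longrightarrow> \<pi>1 w = \<pi>2 w"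
  shows "block_cond_entropy m k \<pi>1 = block_cond_entropy m k \<pi>2"
proof -
  have "\<pi>1 (u @ [a]) = \<pi>2 (u @ [a])" if "u \<in> words m (k - 1)" "a < m" for u a
    using assms words_snocI[OF that] by simp
  then show ?thesis unfolding block_cond_entropy_def by (intro sum.cong refl) simp_all
qed

lemma admissible_blocks_maximum:
  assumes "admissible_blocks m r k \<Phi> \<alpha> \<noteq> {}"
  obtains \<pi> where "\<pi> \<in> admissible_blocks m r k \<Phi> \<alpha>"
    "\<And>\<pi>'. \<pi>' \<in> admissible_blocks m r k \<Phi> \<alpha> \<Longrightarrow> block_cond_entropy m k \<pi>' \<le> block_cond_entropy m k \<pi>"
proof -
  have "continuous_on (admissible_blocks m r k \<Phi> \<alpha>) (block_cond_entropy m k)"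
    by (rule continuous_on_subset[OF continuous_on_block_cond_entropy])
      (auto simp: admissible_blocks_def)
  then show ?thesis
    using continuous_attains_sup[OF compact_admissible_blocks assms] that by blast
qed

section \<open>The entropy maximiser\<close>

definition block_dist :: "nat \<Rightarrow> nat \<Rightarrow> (nat \<Rightarrow> nat) measure \<Rightarrow> nat list \<Rightarrow> real" where
  "block_dist m k \<mu> w = (if w \<in> words m k then measure \<mu> (cyl m w) else 0)"

lemma (in shift_prob) cond_entropy_eq_block_cond_entropy:
  "k \<ge> 1 \<Longrightarrow> cond_entropy (k - 1) = block_cond_entropy m k (\<lambda>w. p w)"
  unfolding cond_entropy_def block_cond_entropy_def by (simp add: p_eq_sum_snoc[symmetric])

lemma block_dist_in_admissible_blocks:
  assumes m: "m > 0" and k: "k \<ge> 1" and dep: "depends_on_first m r k \<Phi>"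
    and \<mu>: "\<mu> \<in> level_measures m r \<Phi> \<alpha>"
  shows "block_dist m k \<mu> \<in> admissible_blocks m r k \<Phi> \<alpha>"
proof -
  interpret shift_inv m \<mu> using \<mu> by (auto simp: level_measures_def intro: inv_measuresD)
  interpret prob_space \<mu> by (rule prob)
  have "block_dist m k \<mu> \<in> block_box m k"
    unfolding block_box_def block_dist_def by (auto simp: PiE_iff)
  moreover have "(\<Sum>w\<in>words m k. block_dist m k \<mu> w) = 1"
    using sum_p_words[of k] by (simp add: block_dist_def)
  moreover have "stationary_blocks m k (block_dist m k \<mu>)"
    unfolding stationary_blocks_def
  proof
    fix u assume u: "u \<in> words m (k - 1)"
    have "Suc (k - 1) = k" using k by simp
    then have "(\<Sum>a<m. block_dist m k \<mu> (a # u)) = p u" "(\<Sum>a<m. block_dist m k \<mu> (u @ [a])) = p u"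
      using words_ConsI[OF u] words_snocI[OF u]
      by (simp_all add: block_dist_def p_eq_sum_Cons[symmetric] p_eq_sum_snoc[symmetric])
    then show "(\<Sum>a<m. block_dist m k \<mu> (a # u)) = (\<Sum>a<m. block_dist m k \<mu> (u @ [a]))" by simp
  qed
  moreover have "block_poly m r k \<Phi> (block_dist m k \<mu>) = \<alpha>"
    using \<mu> integral_eq_block_poly[OF m dep] block_poly_cong[of m k "block_dist m k \<mu>" "\<lambda>w. p w"]
    by (simp add: level_measures_def block_dist_def)
  ultimately show ?thesis unfolding admissible_blocks_def by blast
qed

lemma ms_entropy_le_block_cond_entropy:
  assumes "k \<ge> 1" and "\<mu> \<in> inv_measures m"
  shows "ms_entropy m \<mu> \<le> block_cond_entropy m k (block_dist m k \<mu>)"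
proof -
  interpret shift_inv m \<mu> by (rule inv_measuresD[OF assms(2)])
  have "ms_entropy m \<mu> \<le> cond_entropy (k - 1)" by (rule ms_entropy_le_cond_entropy)
  also have "\<dots> = block_cond_entropy m k (block_dist m k \<mu>)"
    unfolding cond_entropy_eq_block_cond_entropy[OF assms(1)]
    by (rule block_cond_entropy_cong[OF assms(1)]) (simp add: block_dist_def)
  finally show ?thesis .
qed

lemma admissible_blocks_imp_stationary_block_law:
  "m > 0 \<Longrightarrow> k \<ge> 1 \<Longrightarrow> \<pi> \<in> admissible_blocks m r k \<Phi> \<alpha> \<Longrightarrow> stationary_block_law m k \<pi>"
  unfolding stationary_block_law_def admissible_blocks_def by (auto intro: block_box_nonneg)

context stationary_block_law
begin

lemma markov_ext_in_level_measures:
  assumes "depends_on_first m r k \<Phi>" and "block_poly m r k \<Phi> \<pi> = \<alpha>"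
  shows "markov_ext \<in> level_measures m r \<Phi> \<alpha>"
proof -
  interpret N: shift_inv m markov_ext by (rule inv_measuresD[OF markov_ext_in_inv_measures])
  have "integral\<^sup>L (PiM {..<r} (\<lambda>_. markov_ext)) \<Phi> = block_poly m r k \<Phi> (\<lambda>w. N.p w)"
    by (rule N.integral_eq_block_poly[OF m_pos assms(1)])
  also have "\<dots> = \<alpha>"
    using block_poly_cong[of m k "\<lambda>w. N.p w" \<pi>] measure_markov_ext_block assms(2) by simp
  finally show ?thesis using markov_ext_in_inv_measures by (simp add: level_measures_def)
qed

lemma ms_entropy_markov_ext: "ms_entropy m markov_ext = block_cond_entropy m k \<pi>"
proof -
  interpret N: shift_inv m markov_ext by (rule inv_measuresD[OF markov_ext_in_inv_measures])
  have "ms_entropy m markov_ext = N.cond_entropy (k - 1)"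
    by (rule N.ms_entropy_eq_cond_entropy) (rule cond_entropy_markov_ext)
  also have "\<dots> = block_cond_entropy m k \<pi>"
    unfolding N.cond_entropy_eq_block_cond_entropy[OF k_pos]
    by (rule block_cond_entropy_cong[OF k_pos measure_markov_ext_block])
  finally show ?thesis .
qed

end

theorem theorem5p2:
  fixes m r k :: nat and \<Phi> :: "(nat \<Rightarrow> nat \<Rightarrow> nat) \<Rightarrow> real" and \<alpha> :: real
  assumes "m \<ge> 2" and "r \<ge> 1" and "k \<ge> 1"
    and "depends_on_first m r k \<Phi>"
    and "level_measures m r \<Phi> \<alpha> \<noteq> {}"
  shows "\<exists>\<nu> \<in> level_measures m r \<Phi> \<alpha>. markov_measure m (k - 1) \<nu> \<and>
           (\<forall>\<mu> \<in> level_measures m r \<Phi> \<alpha>. ms_entropy m \<mu> \<le> ms_entropy m \<nu>)"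
proof -
  have m: "m > 0" using assms(1) by simp
  note admissible = block_dist_in_admissible_blocks[OF m assms(3,4)]
  then have "admissible_blocks m r k \<Phi> \<alpha> \<noteq> {}" using assms(5) by blast
  then obtain \<pi> where \<pi>: "\<pi> \<in> admissible_blocks m r k \<Phi> \<alpha>"
    and max: "\<And>\<pi>'. \<pi>' \<in> admissible_blocks m r k \<Phi> \<alpha> \<Longrightarrow> block_cond_entropy m k \<pi>' \<le> block_cond_entropy m k \<pi>"
    using admissible_blocks_maximum by blast
  interpret L: stationary_block_law m k \<pi>
    by (rule admissible_blocks_imp_stationary_block_law[OF m assms(3) \<pi>])
  show ?thesis
  proof (intro bexI conjI ballI)
    show "L.markov_ext \<in> level_measures m r \<Phi> \<alpha>"
      using \<pi> by (intro L.markov_ext_in_level_measures assms(4)) (simp add: admissible_blocks_def)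
    show "markov_measure m (k - 1) L.markov_ext" by (rule L.markov_measure_markov_ext)
    fix \<mu> assume \<mu>: "\<mu> \<in> level_measures m r \<Phi> \<alpha>"
    then have "ms_entropy m \<mu> \<le> block_cond_entropy m k (block_dist m k \<mu>)"
      by (intro ms_entropy_le_block_cond_entropy assms(3)) (simp add: level_measures_def)
    also have "\<dots> \<le> ms_entropy m L.markov_ext"
      using max[OF admissible[OF \<mu>]] by (simp add: L.ms_entropy_markov_ext)
    finally show "ms_entropy m \<mu> \<le> ms_entropy m L.markov_ext" .
  qed
qed

end
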